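(* Let $D$ be an $m\times n$ array and $h$ a positive integer. Let $D\otimes J_{h,1}$ be the $mh\times n$ array in which cell $((r-1)h+s,\,c)$, for $r\in[1,m]$, $s\in[1,h]$, $c\in[1,n]$, is filled if and only if $(r,c)$ is filled in $D$. Then the $h$-knight is a solution to $T(D)$ if and only if the bishop is a solution to $T(D\otimes J_{h,1})$.
   Context: Arrays are partially filled and toroidal; $F(B)$ denotes the filled cells; every row and column contains a filled cell. $s_R(i,j)=(i,j+t)$, $s_C(i,j)=(i+t,j)$ with $t\ge1$ minimal such that the cell is filled. The $a$-knight is $N_a=s_C\circ s_R^{a}$; the bishop is $N_1=s_C\circ s_R$. A move function is a solution to $T(B)$ if it is a permutation of $F(B)$ forming a single cycle of length $|F(B)|$. *)

theory Defs
  imports Main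
begin

text \<open>Arrays are m x n, toroidal, with cells indexed from 0: (i,j) with i < m, j < n.
  A partially filled array is given by its set of filled cells F.\<close>

definition is_array :: "nat \<Rightarrow> nat \<Rightarrow> (nat \<times> nat) set \<Rightarrow> bool" where
  "is_array m n F \<longleftrightarrow> 0 < m \<and> 0 < n \<and> F \<subseteq> {..<m} \<times> {..<n}
     \<and> (\<forall>i<m. \<exists>j. (i, j) \<in> F) \<and> (\<forall>j<n. \<exists>i. (i, j) \<in> F)"

definition sR :: "nat \<Rightarrow> (nat \<times> nat) set \<Rightarrow> nat \<times> nat \<Rightarrow> nat \<times> nat" where
  "sR n F = (\<lambda>(i, j). (i, (j + (LEAST t. 1 \<le> t \<and> (i, (j + t) mod n) \<in> F)) mod n))"

definition sC :: "nat \<Rightarrow> (nat \<times> nat) set \<Rightarrow> nat \<times> nat \<Rightarrow> nat \<times> nat" where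
  "sC m F = (\<lambda>(i, j). ((i + (LEAST t. 1 \<le> t \<and> ((i + t) mod m, j) \<in> F)) mod m, j))"

definition knight :: "nat \<Rightarrow> nat \<Rightarrow> (nat \<times> nat) set \<Rightarrow> nat \<Rightarrow> nat \<times> nat \<Rightarrow> nat \<times> nat" where
  "knight m n F a = sC m F \<circ> (sR n F ^^ a)"

definition bishop :: "nat \<Rightarrow> nat \<Rightarrow> (nat \<times> nat) set \<Rightarrow> nat \<times> nat \<Rightarrow> nat \<times> nat" where
  "bishop m n F = sC m F \<circ> sR n F"

text \<open>A move function f is a solution to T(B): it is a permutation of F(B) forming a single
  cycle of length |F(B)|, i.e. a bijection of F onto itself whose orbit of every filled cell is all of F.\<close>
definition is_solution :: "(nat \<times> nat) set \<Rightarrow> (nat \<times> nat \<Rightarrow> nat \<times> nat) \<Rightarrow> bool" where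
  "is_solution F f \<longleftrightarrow> bij_betw f F F \<and> (\<forall>x\<in>F. {(f ^^ k) x | k. True} = F)"

text \<open>D \<otimes> J_{h,1}: row i (0-indexed) of the mh x n array copies row (i div h) of D.\<close>
definition kron_col :: "nat \<Rightarrow> (nat \<times> nat) set \<Rightarrow> (nat \<times> nat) set" where
  "kron_col h F = {(i, c). (i div h, c) \<in> F}"

end

theory Submission
  imports Defs
begin

text \<open>Send a cell \<open>x = (r, c)\<close> of \<open>D\<close> to the top cell \<open>(r h, c)\<close> of its block in
  \<open>E = D \<otimes> J\<^sub>h\<^sub>,\<^sub>1\<close>. Every row of the block is a copy of row \<open>r\<close> of \<open>D\<close>, so inside the block
  the bishop moves one row down while performing one row step \<open>s\<^sub>R\<close> of \<open>D\<close>; from the bottom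
  row of the block the column step of \<open>E\<close> jumps to the top row of the block of the next
  filled cell of \<open>D\<close> in that column. Hence \<open>h\<close> bishop moves starting at a top cell perform
  one \<open>h\<close>-knight move of \<open>D\<close>, and \<open>E\<close> is a tower of height \<open>h\<close> over \<open>D\<close>: every cell of
  \<open>E\<close> is reached from a top cell and reaches one, and the row index modulo \<open>h\<close> counts the
  bishop moves. A single bishop cycle through \<open>E\<close> therefore amounts to a single knight
  cycle through \<open>D\<close>, and conversely.\<close>

section \<open>Cyclic successors\<close>

definition cyc_gap :: "nat \<Rightarrow> (nat \<Rightarrow> bool) \<Rightarrow> nat \<Rightarrow> nat" where
  "cyc_gap n P j = (LEAST t. 1 \<le> t \<and> P ((j + t) mod n))"

definition cyc_next :: "nat \<Rightarrow> (nat \<Rightarrow> bool) \<Rightarrow> nat \<Rightarrow> nat" where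
  "cyc_next n P j = (j + cyc_gap n P j) mod n"

lemma sR_eq_cyc_next: "sR n F (i, j) = (i, cyc_next n (\<lambda>c. (i, c) \<in> F) j)"
  by (simp add: sR_def cyc_next_def cyc_gap_def)

lemma sC_eq_cyc_next: "sC m F (i, j) = (cyc_next m (\<lambda>r. (r, j) \<in> F) i, j)"
  by (simp add: sC_def cyc_next_def cyc_gap_def)

lemma cyc_gap_le: "1 \<le> t \<Longrightarrow> P ((j + t) mod n) \<Longrightarrow> cyc_gap n P j \<le> t"
  unfolding cyc_gap_def by (rule Least_le) simp

lemma cyc_gap:
  assumes "j < n" and "P j"
  shows "1 \<le> cyc_gap n P j" and "P ((j + cyc_gap n P j) mod n)"
proof -
  have "1 \<le> n \<and> P ((j + n) mod n)" using assms by simp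
  then have "1 \<le> cyc_gap n P j \<and> P ((j + cyc_gap n P j) mod n)"
    unfolding cyc_gap_def by (rule LeastI)
  then show "1 \<le> cyc_gap n P j" "P ((j + cyc_gap n P j) mod n)" by simp_all
qed

lemma cyc_next_holds: "j < n \<Longrightarrow> P j \<Longrightarrow> P (cyc_next n P j)"
  using cyc_gap(2) by (simp add: cyc_next_def)

lemma inj_on_cyc_next: "inj_on (cyc_next n P) {j. j < n \<and> P j}"
proof -
  have neq: "cyc_next n P j1 \<noteq> cyc_next n P j2"
    if "j1 < j2" "j2 < n" "P j1" "P j2" for j1 j2
  proof -
    let ?g1 = "cyc_gap n P j1" and ?g2 = "cyc_gap n P j2"
    have "?g1 \<le> j2 - j1" using that by (intro cyc_gap_le) simp_all
    then have next1: "j1 < cyc_next n P j1" "cyc_next n P j1 \<le> j2"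
      using that cyc_gap(1)[of j1 n P] by (simp_all add: cyc_next_def)
    have "(j2 + (n - (j2 - j1))) mod n = j1" using that by simp
    then have "?g2 \<le> n - (j2 - j1)" using that by (intro cyc_gap_le) simp_all
    then have "cyc_next n P j2 \<le> j1 \<or> j2 < cyc_next n P j2"
      using that cyc_gap(1)[of j2 n P]
      by (cases "j2 + ?g2 < n") (auto simp: cyc_next_def le_mod_geq)
    then show ?thesis using next1 by auto
  qed
  show ?thesis
  proof (rule inj_onI)
    fix j1 j2 assume "j1 \<in> {j. j < n \<and> P j}" "j2 \<in> {j. j < n \<and> P j}"
      and "cyc_next n P j1 = cyc_next n P j2"
    then show "j1 = j2" using neq by (metis mem_Collect_eq linorder_neqE_nat)
  qed
qed

lemma mod_mult_div_eq: "i mod (m * h) div h = i div h mod (m :: nat)"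
  by (cases "h = 0") (simp_all add: mod_mult2_eq[of i h m] mult.commute)

lemma cyc_gap_blowup_inner:
  assumes "r < m" and "Suc s < h" and "P r"
  shows "cyc_gap (m * h) (\<lambda>i. P (i div h)) (r * h + s) = 1"
proof (rule antisym)
  have "(r * h + v) div h = r" if "v < h" for v using that by simp
  then have "(r * h + Suc s) div h = r" using \<open>Suc s < h\<close> .
  then show "cyc_gap (m * h) (\<lambda>i. P (i div h)) (r * h + s) \<le> 1"
    using assms by (intro cyc_gap_le) (simp_all add: mod_mult_div_eq)
  have "r * h + s < m * h"
    using assms(1,2) mult_le_mono1[of "Suc r" m h] by simp
  then show "1 \<le> cyc_gap (m * h) (\<lambda>i. P (i div h)) (r * h + s)"
    using assms by (intro cyc_gap(1)) simp_all
qed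

lemma cyc_gap_blowup_last:
  assumes "r < m" and "s < h" and "\<not> Suc s < h" and "P r"
  shows "r * h + s + cyc_gap (m * h) (\<lambda>i. P (i div h)) (r * h + s) = (r + cyc_gap m P r) * h"
proof -
  let ?Q = "\<lambda>i. P (i div h)" and ?g = "cyc_gap (m * h) (\<lambda>i. P (i div h)) (r * h + s)"
    and ?T = "cyc_gap m P r"
  have T: "1 \<le> ?T" "P ((r + ?T) mod m)"
    using cyc_gap[of r m P] assms by simp_all
  have "h \<le> h * ?T" using mult_le_mono2[OF T(1), of h] by simp
  then have s_less: "s < h * ?T" using assms(2) by linarith
  then have top: "r * h + s + (h * ?T - s) = (r + ?T) * h"
    by (simp add: algebra_simps)
  have "?g = h * ?T - s"
  proof (rule antisym)
    show "?g \<le> h * ?T - s"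
      using top s_less T(2) assms(2) by (intro cyc_gap_le) (simp_all add: mod_mult_div_eq)
    have "r * h + s < m * h"
      using assms(1,2) mult_le_mono1[of "Suc r" m h] by simp
    then have g: "1 \<le> ?g" "?Q ((r * h + s + ?g) mod (m * h))"
      using cyc_gap[of "r * h + s" "m * h" ?Q] assms by simp_all
    have "h \<le> s + ?g" using g(1) assms(2,3) by linarith
    then have "1 \<le> (s + ?g) div h"
      using assms(2) by (simp add: Suc_le_eq div_greater_zero_iff)
    moreover have "P ((r + (s + ?g) div h) mod m)"
      using g(2) assms(2) by (simp add: mod_mult_div_eq add.assoc)
    ultimately have "?T \<le> (s + ?g) div h"
      by (intro cyc_gap_le)
    then have "h * ?T \<le> s + ?g"
      by (rule order.trans[OF mult_le_mono2 times_div_less_eq_dividend])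
    then show "h * ?T - s \<le> ?g" by simp
  qed
  with top show ?thesis by simp
qed

lemma cyc_next_blowup:
  assumes "r < m" and "s < h" and "P r"
  shows "cyc_next (m * h) (\<lambda>i. P (i div h)) (r * h + s) =
         (if Suc s < h then r * h + Suc s else cyc_next m P r * h)"
proof (cases "Suc s < h")
  case True
  then have "r * h + Suc s < m * h"
    using assms(1) mult_le_mono1[of "Suc r" m h] by simp
  then show ?thesis
    using True assms by (simp add: cyc_next_def cyc_gap_blowup_inner)
next
  case False
  then show ?thesis
    using assms by (simp add: cyc_next_def cyc_gap_blowup_last mod_mult_mult2)
qed

section \<open>Orbits and towers\<close>

lemma funpow_mem: "(\<And>x. x \<in> A \<Longrightarrow> f x \<in> A) \<Longrightarrow> x \<in> A \<Longrightarrow> (f ^^ k) x \<in> A"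
  by (induction k) simp_all

lemma funpow_semiconj:
  assumes "\<And>x. x \<in> A \<Longrightarrow> f x \<in> A" and "\<And>x. x \<in> A \<Longrightarrow> g (e x) = e (f x)" and "x \<in> A"
  shows "(g ^^ k) (e x) = e ((f ^^ k) x)"
  using assms(3) by (induction k) (simp_all add: assms(2) funpow_mem[OF assms(1)])

lemma funpow_phase:
  assumes "\<And>y. y \<in> A \<Longrightarrow> f y \<in> A" and "\<And>y. y \<in> A \<Longrightarrow> p (f y) mod h = Suc (p y) mod h"
    and "y \<in> A"
  shows "p ((f ^^ k) y) mod h = (p y + k) mod h"
proof (induction k)
  case (Suc k)
  have "p ((f ^^ Suc k) y) mod h = Suc (p ((f ^^ k) y) mod h) mod h"
    using assms by (simp add: funpow_mem mod_Suc_eq)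
  then show ?case using Suc.IH by (simp add: mod_Suc_eq)
qed simp

definition single_orbit :: "'a set \<Rightarrow> ('a \<Rightarrow> 'a) \<Rightarrow> bool" where
  "single_orbit F f \<longleftrightarrow> (\<forall>x\<in>F. {(f ^^ k) x | k. True} = F)"

lemma is_solution_iff_single_orbit:
  assumes "finite F"
  shows "is_solution F f \<longleftrightarrow> single_orbit F f"
  unfolding single_orbit_def
proof
  assume orbits: "\<forall>x\<in>F. {(f ^^ k) x | k. True} = F"
  have maps: "f x \<in> F" if "x \<in> F" for x
  proof -
    have "f x = (f ^^ 1) x" by simp
    then have "f x \<in> {(f ^^ k) x | k. True}" by blast
    with orbits that show ?thesis by blast
  qed
  have "F \<subseteq> f ` F"
  proof
    fix y assume "y \<in> F"
    then have "y \<in> {(f ^^ k) (f y) | k. True}" using orbits maps by simp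
    then obtain k where "y = (f ^^ k) (f y)" by blast
    then have "y = f ((f ^^ k) y)" by (simp add: funpow_swap1)
    moreover have "(f ^^ k) y \<in> F" using \<open>y \<in> F\<close> maps by (rule funpow_mem[rotated])
    ultimately show "y \<in> f ` F" by blast
  qed
  with maps have "f ` F = F" by blast
  moreover have "inj_on f F" using finite_surj_inj[OF assms \<open>F \<subseteq> f ` F\<close>] .
  ultimately show "is_solution F f" using orbits by (simp add: is_solution_def bij_betw_def)
qed (simp add: is_solution_def)

text \<open>\<open>B\<close> is a tower of height \<open>h\<close> over \<open>K\<close>: on the copy \<open>emb ` D\<close> of \<open>D\<close> the map \<open>B\<^sup>h\<close>
  acts as \<open>K\<close>, and since \<open>phase\<close> counts \<open>B\<close>-steps modulo \<open>h\<close>, a \<open>B\<close>-orbit can pass from one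
  point of \<open>emb ` D\<close> to another only in a multiple of \<open>h\<close> steps.\<close>

locale tower =
  fixes D :: "'a set" and K :: "'a \<Rightarrow> 'a" and E :: "'b set" and B :: "'b \<Rightarrow> 'b"
    and emb :: "'a \<Rightarrow> 'b" and h :: nat and phase :: "'b \<Rightarrow> nat"
  assumes K_mem: "\<And>x. x \<in> D \<Longrightarrow> K x \<in> D"
    and B_mem: "\<And>y. y \<in> E \<Longrightarrow> B y \<in> E"
    and emb_mem: "\<And>x. x \<in> D \<Longrightarrow> emb x \<in> E"
    and inj_on_emb: "inj_on emb D"
    and return: "\<And>x. x \<in> D \<Longrightarrow> (B ^^ h) (emb x) = emb (K x)"
    and enter: "\<And>y. y \<in> E \<Longrightarrow> \<exists>x\<in>D. \<exists>k. (B ^^ k) y = emb x"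
    and leave: "\<And>y. y \<in> E \<Longrightarrow> \<exists>x\<in>D. \<exists>k. (B ^^ k) (emb x) = y"
    and phase_step: "\<And>y. y \<in> E \<Longrightarrow> phase (B y) mod h = Suc (phase y) mod h"
    and phase_emb: "\<And>x. x \<in> D \<Longrightarrow> phase (emb x) mod h = 0"
begin

lemma K_funpow_mem: "x \<in> D \<Longrightarrow> (K ^^ k) x \<in> D"
  using K_mem by (rule funpow_mem)

lemma B_funpow_mem: "y \<in> E \<Longrightarrow> (B ^^ k) y \<in> E"
  using B_mem by (rule funpow_mem)

lemma return_funpow: "x \<in> D \<Longrightarrow> (B ^^ (h * q)) (emb x) = emb ((K ^^ q) x)"
  using funpow_semiconj[of D K "B ^^ h" emb x q] K_mem return by (simp add: funpow_mult)

lemma single_orbit_base_imp_total: "single_orbit D K \<Longrightarrow> single_orbit E B"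
  unfolding single_orbit_def
proof (intro ballI subset_antisym subsetI)
  fix y z assume K_orbits: "\<forall>x\<in>D. {(K ^^ k) x | k. True} = D" and "y \<in> E"
  show "z \<in> E" if "z \<in> {(B ^^ k) y | k. True}"
    using that \<open>y \<in> E\<close> B_funpow_mem by blast
  assume "z \<in> E"
  obtain x c where "x \<in> D" and x: "(B ^^ c) y = emb x" using enter[OF \<open>y \<in> E\<close>] by blast
  obtain w a where "w \<in> D" and w: "(B ^^ a) (emb w) = z" using leave[OF \<open>z \<in> E\<close>] by blast
  obtain q where "w = (K ^^ q) x" using K_orbits \<open>x \<in> D\<close> \<open>w \<in> D\<close> by blast
  then have "(B ^^ (a + h * q + c)) y = z"
    using x w return_funpow[OF \<open>x \<in> D\<close>] by (simp add: funpow_add)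
  then show "z \<in> {(B ^^ k) y | k. True}" by blast
qed

lemma single_orbit_total_imp_base: "single_orbit E B \<Longrightarrow> single_orbit D K"
  unfolding single_orbit_def
proof (intro ballI subset_antisym subsetI)
  fix x z assume B_orbits: "\<forall>y\<in>E. {(B ^^ k) y | k. True} = E" and "x \<in> D"
  show "z \<in> D" if "z \<in> {(K ^^ k) x | k. True}"
    using that \<open>x \<in> D\<close> K_funpow_mem by blast
  assume "z \<in> D"
  have "{(B ^^ k) (emb x) | k. True} = E" using B_orbits emb_mem \<open>x \<in> D\<close> by blast
  then obtain k where k: "(B ^^ k) (emb x) = emb z"
    using emb_mem[OF \<open>z \<in> D\<close>] by auto
  have "k mod h = 0"
    using funpow_phase[of E B phase h, OF B_mem phase_step emb_mem[OF \<open>x \<in> D\<close>], of k]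
    by (simp add: k phase_emb \<open>x \<in> D\<close> \<open>z \<in> D\<close> mod_add_left_eq[symmetric])
  then have "emb ((K ^^ (k div h)) x) = emb z"
    using k return_funpow[OF \<open>x \<in> D\<close>] by (metis add_0_right mult_div_mod_eq)
  then have "(K ^^ (k div h)) x = z"
    using inj_on_emb K_funpow_mem[OF \<open>x \<in> D\<close>] \<open>z \<in> D\<close> by (simp add: inj_on_eq_iff)
  then show "z \<in> {(K ^^ k) x | k. True}" by blast
qed

lemma single_orbit_iff: "single_orbit D K \<longleftrightarrow> single_orbit E B"
  using single_orbit_base_imp_total single_orbit_total_imp_base by blast

end

lemma sR_fst: "fst (sR n F x) = fst x"
  by (cases x) (simp add: sR_def)

lemma sR_mem:
  assumes "F \<subseteq> UNIV \<times> {..<n}" and "x \<in> F"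
  shows "sR n F x \<in> F"
proof (cases x)
  case (Pair i j)
  then have "j < n" using assms by auto
  then show ?thesis
    using assms(2) Pair cyc_next_holds[of j n "\<lambda>c. (i, c) \<in> F"] by (simp add: sR_eq_cyc_next)
qed

lemma sC_mem:
  assumes "F \<subseteq> {..<m} \<times> UNIV" and "x \<in> F"
  shows "sC m F x \<in> F"
proof (cases x)
  case (Pair i j)
  then have "i < m" using assms by auto
  then show ?thesis
    using assms(2) Pair cyc_next_holds[of i m "\<lambda>r. (r, j) \<in> F"] by (simp add: sC_eq_cyc_next)
qed

lemma sR_funpow_mem: "F \<subseteq> UNIV \<times> {..<n} \<Longrightarrow> x \<in> F \<Longrightarrow> (sR n F ^^ k) x \<in> F"
  by (induction k) (simp_all add: sR_mem)

lemma bishop_mem: "F \<subseteq> {..<m} \<times> {..<n} \<Longrightarrow> x \<in> F \<Longrightarrow> bishop m n F x \<in> F"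
  unfolding bishop_def by (auto intro!: sC_mem sR_mem)

lemma knight_mem: "F \<subseteq> {..<m} \<times> {..<n} \<Longrightarrow> x \<in> F \<Longrightarrow> knight m n F a x \<in> F"
  unfolding knight_def by (auto intro!: sC_mem sR_funpow_mem)

lemma inj_on_sR:
  assumes "F \<subseteq> UNIV \<times> {..<n}"
  shows "inj_on (sR n F) F"
proof (rule inj_onI)
  fix x y assume "x \<in> F" "y \<in> F" and eq: "sR n F x = sR n F y"
  obtain i j i' j' where x: "x = (i, j)" and y: "y = (i', j')" by fastforce
  have "i' = i" using arg_cong[OF eq, of fst] x y by (simp add: sR_fst)
  then have "cyc_next n (\<lambda>c. (i, c) \<in> F) j = cyc_next n (\<lambda>c. (i, c) \<in> F) j'"
    using eq x y by (simp add: sR_eq_cyc_next)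
  moreover have "j \<in> {c. c < n \<and> (i, c) \<in> F}" "j' \<in> {c. c < n \<and> (i, c) \<in> F}"
    using assms \<open>x \<in> F\<close> \<open>y \<in> F\<close> x y \<open>i' = i\<close> by auto
  ultimately show "x = y"
    using x y \<open>i' = i\<close> inj_on_cyc_next[THEN inj_onD] by blast
qed

lemma sR_funpow_image:
  assumes "finite F" and "F \<subseteq> UNIV \<times> {..<n}"
  shows "(sR n F ^^ k) ` F = F"
proof -
  have "bij_betw (sR n F) F F"
    using assms by (simp add: bij_betw_def inj_on_sR endo_inj_surj sR_mem image_subsetI)
  then show ?thesis by (simp add: bij_betw_funpow bij_betw_imp_surj_on)
qed

section \<open>Blowing up rows\<close>

definition block_cell :: "nat \<Rightarrow> nat \<times> nat \<Rightarrow> nat \<Rightarrow> nat \<times> nat" where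
  "block_cell h x s = (fst x * h + s, snd x)"

lemma block_cell_mem_kron_col: "x \<in> D \<Longrightarrow> s < h \<Longrightarrow> block_cell h x s \<in> kron_col h D"
  by (simp add: block_cell_def kron_col_def)

lemma kron_col_cases:
  assumes "y \<in> kron_col h D" and "0 < h"
  obtains x s where "x \<in> D" and "s < h" and "y = block_cell h x s"
proof -
  obtain i j where y: "y = (i, j)" by fastforce
  show ?thesis
  proof
    show "(i div h, j) \<in> D" using assms(1) y by (simp add: kron_col_def)
    show "i mod h < h" using assms(2) by simp
    show "y = block_cell h (i div h, j) (i mod h)" by (simp add: y block_cell_def)
  qed
qed

lemma inj_block_cell_0: "0 < h \<Longrightarrow> inj (\<lambda>x. block_cell h x 0)"
  by (rule injI) (simp add: block_cell_def prod_eq_iff)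

lemma kron_col_subset:
  assumes "D \<subseteq> {..<m} \<times> {..<n}" and "0 < h"
  shows "kron_col h D \<subseteq> {..<m * h} \<times> {..<n}"
proof
  fix y assume "y \<in> kron_col h D"
  then obtain x s where "x \<in> D" "s < h" "y = block_cell h x s"
    using assms(2) by (rule kron_col_cases)
  moreover have "fst x * h + s < m * h" if "fst x < m" "s < h"
    using that mult_le_mono1[of "Suc (fst x)" m h] by simp
  ultimately show "y \<in> {..<m * h} \<times> {..<n}"
    using assms(1) by (auto simp: block_cell_def)
qed

lemma sR_kron_col:
  "s < h \<Longrightarrow> sR n (kron_col h D) (block_cell h x s) = block_cell h (sR n D x) s"
  by (cases x) (simp add: block_cell_def sR_eq_cyc_next kron_col_def)

lemma sC_kron_col:
  assumes "x \<in> D" and "fst x < m" and "s < h"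
  shows "sC (m * h) (kron_col h D) (block_cell h x s) =
         (if Suc s < h then block_cell h x (Suc s) else block_cell h (sC m D x) 0)"
proof (cases x)
  case (Pair r j)
  have "(\<lambda>i. (i, j) \<in> kron_col h D) = (\<lambda>i. (i div h, j) \<in> D)"
    by (simp add: kron_col_def)
  then show ?thesis
    using cyc_next_blowup[of r m s h "\<lambda>r. (r, j) \<in> D"] assms Pair
    by (simp add: block_cell_def sC_eq_cyc_next)
qed

lemma bishop_kron_col:
  assumes "D \<subseteq> {..<m} \<times> {..<n}" and "x \<in> D" and "s < h"
  shows "bishop (m * h) n (kron_col h D) (block_cell h x s) =
         (if Suc s < h then block_cell h (sR n D x) (Suc s)
          else block_cell h (sC m D (sR n D x)) 0)"
proof -
  have "sR n D x \<in> D" using assms by (auto intro: sR_mem)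
  moreover have "fst (sR n D x) < m" using assms by (auto simp: sR_fst)
  ultimately show ?thesis
    using assms(3) by (simp add: bishop_def sR_kron_col sC_kron_col)
qed

lemma bishop_funpow_kron_col:
  assumes "D \<subseteq> {..<m} \<times> {..<n}" and "x \<in> D" and "s + t < h"
  shows "(bishop (m * h) n (kron_col h D) ^^ t) (block_cell h x s) =
         block_cell h ((sR n D ^^ t) x) (s + t)"
  using assms(3)
proof (induction t)
  case (Suc t)
  have "(sR n D ^^ t) x \<in> D" using assms(1,2) by (auto intro: sR_funpow_mem)
  then show ?case using Suc assms(1) by (simp add: bishop_kron_col)
qed simp

lemma bishop_funpow_kron_col_exit:
  assumes "D \<subseteq> {..<m} \<times> {..<n}" and "x \<in> D" and "s < h"
  shows "(bishop (m * h) n (kron_col h D) ^^ (h - s)) (block_cell h x s) =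
         block_cell h (knight m n D (h - s) x) 0"
proof -
  define t where "t = h - Suc s"
  have t: "h - s = Suc t" "Suc (s + t) = h" "s + t < h"
    using assms(3) by (simp_all add: t_def)
  have "(sR n D ^^ t) x \<in> D" using assms(1,2) by (auto intro: sR_funpow_mem)
  then show ?thesis
    using bishop_funpow_kron_col[OF assms(1,2) t(3)] assms(1) t(1,2)
    by (simp add: bishop_kron_col knight_def)
qed

lemma bishop_kron_col_reaches_top:
  assumes "D \<subseteq> {..<m} \<times> {..<n}" and "0 < h" and "y \<in> kron_col h D"
  shows "\<exists>x\<in>D. \<exists>k. (bishop (m * h) n (kron_col h D) ^^ k) y = block_cell h x 0"
proof -
  obtain x s where "x \<in> D" "s < h" "y = block_cell h x s"
    using assms(3,2) by (rule kron_col_cases)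
  then have "(bishop (m * h) n (kron_col h D) ^^ (h - s)) y = block_cell h (knight m n D (h - s) x) 0"
    using bishop_funpow_kron_col_exit[OF assms(1)] by simp
  moreover have "knight m n D (h - s) x \<in> D"
    using assms(1) \<open>x \<in> D\<close> by (rule knight_mem)
  ultimately show ?thesis by blast
qed

lemma bishop_kron_col_reached_from_top:
  assumes "D \<subseteq> {..<m} \<times> {..<n}" and "0 < h" and "y \<in> kron_col h D"
  shows "\<exists>x\<in>D. \<exists>k. (bishop (m * h) n (kron_col h D) ^^ k) (block_cell h x 0) = y"
proof -
  obtain x s where "x \<in> D" "s < h" and y: "y = block_cell h x s"
    using assms(3,2) by (rule kron_col_cases)
  have "finite D" using assms(1) by (rule finite_subset) simp
  then obtain w where "w \<in> D" and "x = (sR n D ^^ s) w"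
    using sR_funpow_image[of D n s] assms(1) \<open>x \<in> D\<close> by blast
  then show ?thesis
    using bishop_funpow_kron_col[OF assms(1) \<open>w \<in> D\<close>, of 0 s] \<open>s < h\<close> y by auto
qed

lemma bishop_kron_col_row_mod:
  assumes "D \<subseteq> {..<m} \<times> {..<n}" and "0 < h" and "y \<in> kron_col h D"
  shows "fst (bishop (m * h) n (kron_col h D) y) mod h = Suc (fst y) mod h"
proof -
  obtain x s where "x \<in> D" "s < h" and y: "y = block_cell h x s"
    using assms(3,2) by (rule kron_col_cases)
  note step = bishop_kron_col[OF assms(1) \<open>x \<in> D\<close> \<open>s < h\<close>]
  show ?thesis
  proof (cases "Suc s < h")
    case True
    then show ?thesis using step y by (simp add: block_cell_def sR_fst)
  next
    case False
    then have "Suc (fst y) = (fst x + 1) * h" using \<open>s < h\<close> y by (simp add: block_cell_def)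
    then show ?thesis using step False y by (simp add: block_cell_def)
  qed
qed

lemma tower_kron_col:
  assumes D_sub: "D \<subseteq> {..<m} \<times> {..<n}" and "0 < h"
  shows "tower D (knight m n D h) (kron_col h D) (bishop (m * h) n (kron_col h D))
           (\<lambda>x. block_cell h x 0) h fst"
proof
  show "knight m n D h x \<in> D" if "x \<in> D" for x
    using D_sub that by (rule knight_mem)
  show "bishop (m * h) n (kron_col h D) y \<in> kron_col h D" if "y \<in> kron_col h D" for y
    using kron_col_subset[OF assms] that by (rule bishop_mem)
  show "block_cell h x 0 \<in> kron_col h D" if "x \<in> D" for x
    using that \<open>0 < h\<close> by (rule block_cell_mem_kron_col)
  show "inj_on (\<lambda>x. block_cell h x 0) D"
    using inj_block_cell_0[OF \<open>0 < h\<close>] by (rule inj_on_subset) simp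
  show "(bishop (m * h) n (kron_col h D) ^^ h) (block_cell h x 0) = block_cell h (knight m n D h x) 0"
    if "x \<in> D" for x
    using bishop_funpow_kron_col_exit[OF D_sub that \<open>0 < h\<close>] by simp
  show "fst (block_cell h x 0) mod h = 0" for x
    by (simp add: block_cell_def)
qed (use assms in \<open>simp_all add: bishop_kron_col_reaches_top bishop_kron_col_reached_from_top
                                  bishop_kron_col_row_mod\<close>)

theorem lemma4p1:
  fixes m n h :: nat and D :: "(nat \<times> nat) set"
  assumes "is_array m n D" and "0 < h"
  shows "is_solution D (knight m n D h) \<longleftrightarrow>
         is_solution (kron_col h D) (bishop (m * h) n (kron_col h D))"
proof -
  have D_sub: "D \<subseteq> {..<m} \<times> {..<n}"
    using assms(1) by (simp add: is_array_def)
  have "finite D"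
    using D_sub by (rule finite_subset) simp
  moreover have "finite (kron_col h D)"
    using kron_col_subset[OF D_sub \<open>0 < h\<close>] by (rule finite_subset) simp
  ultimately show ?thesis
    using tower.single_orbit_iff[OF tower_kron_col[OF D_sub \<open>0 < h\<close>]]
    by (simp add: is_solution_iff_single_orbit)
qed

end
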